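(* Let $X\in[0,1]^{N\times N}$, let $Q_{2D}(X)$ be the two-dimensional first-order $\Sigma\Delta$ quantization of $X$ with an alphabet of step size $\delta$, whose state matrix $u$ satisfies $X-Q_{2D}(X)=DuD^T$ and $\|u\|_{\max}\leq\delta/2$, and let $\hat X$ be a solution to $$\min_{Z\in\mathbb{R}^{N\times N}}\|D^TZ\|_1+\|ZD\|_1\quad\text{subject to}\quad\|D^{-1}(Z-Q_{2D}(X))(D^{-1})^T\|_{\max}\leq\delta/2.$$ Then for every integer $1\leq s\leq N^2$, $$\|\hat X-X\|_F\leq C\Big(\sqrt{s}\sqrt{\delta}+\sqrt{\sigma_s(D^TX)}+\sqrt{\sigma_s(XD)}\Big)\sqrt{\delta},$$ where $C$ is a constant independent of $X$.
   Context: $D$ is the $N\times N$ matrix with $1$ on the diagonal, $-1$ on the subdiagonal, $0$ elsewhere. For matrices, $\|\cdot\|_1$ is the entrywise $\ell_1$ norm and $\|\cdot\|_{\max}$ the largest absolute entry; for a matrix $Z$, $\sigma_s(Z)$ is the $\ell_1$ distance between the vectorization of $Z$ and its best $s$-term approximation. The two-dimensional first-order $\Sigma\Delta$ quantization with a finite alphabet $\mathcal{A}$: with $u_{i,0}=u_{0,j}=0$, for $i,j\geq1$ set $q_{i,j}=Q_{\mathcal{A}}(u_{i,j-1}+u_{i-1,j}-u_{i-1,j-1}+X_{i,j})$ and $u_{i,j}=u_{i,j-1}+u_{i-1,j}-u_{i-1,j-1}+X_{i,j}-q_{i,j}$, $Q_{\mathcal{A}}(z)$ a nearest element of $\mathcal{A}$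 to $z$; $Q_{2D}(X)=q$. The alphabet is assumed such that $\|u\|_{\max}\leq\delta/2$. *)

theory Defs
  imports Complex_Main
begin

text \<open>N x N matrices are represented as functions nat \<Rightarrow> nat \<Rightarrow> real,
 indexed by 1..N (entries outside this range are irrelevant for every notion below).\<close>

definition Dmat :: "nat \<Rightarrow> nat \<Rightarrow> real" where
  "Dmat i j = (if i = j then 1 else if i = Suc j then -1 else 0)"

definition Dinv :: "nat \<Rightarrow> nat \<Rightarrow> real" where
  "Dinv i j = (if j \<le> i then 1 else 0)"

definition mmult :: "nat \<Rightarrow> (nat \<Rightarrow> nat \<Rightarrow> real) \<Rightarrow> (nat \<Rightarrow> nat \<Rightarrow> real) \<Rightarrow> nat \<Rightarrow> nat \<Rightarrow> real" where
  "mmult N A B = (\<lambda>i j. \<Sum>k=1..N. A i k * B k j)"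

definition mtr :: "(nat \<Rightarrow> nat \<Rightarrow> real) \<Rightarrow> nat \<Rightarrow> nat \<Rightarrow> real" where
  "mtr A = (\<lambda>i j. A j i)"

definition mdiff :: "(nat \<Rightarrow> nat \<Rightarrow> real) \<Rightarrow> (nat \<Rightarrow> nat \<Rightarrow> real) \<Rightarrow> nat \<Rightarrow> nat \<Rightarrow> real" where
  "mdiff A B = (\<lambda>i j. A i j - B i j)"

definition l1norm :: "nat \<Rightarrow> (nat \<Rightarrow> nat \<Rightarrow> real) \<Rightarrow> real" where
  "l1norm N Z = (\<Sum>i=1..N. \<Sum>j=1..N. \<bar>Z i j\<bar>)"

definition maxnorm :: "nat \<Rightarrow> (nat \<Rightarrow> nat \<Rightarrow> real) \<Rightarrow> real" where
  "maxnorm N Z = Max (insert 0 {\<bar>Z i j\<bar> | i j. i \<in> {1..N} \<and> j \<in> {1..N}})"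

definition frob :: "nat \<Rightarrow> (nat \<Rightarrow> nat \<Rightarrow> real) \<Rightarrow> real" where
  "frob N Z = sqrt (\<Sum>i=1..N. \<Sum>j=1..N. (Z i j)\<^sup>2)"

definition sigma_s :: "nat \<Rightarrow> nat \<Rightarrow> (nat \<Rightarrow> nat \<Rightarrow> real) \<Rightarrow> real" where
  "sigma_s N s Z = Inf {l1norm N (mdiff Z Y) | Y.
      card {(i,j) \<in> {1..N} \<times> {1..N}. Y i j \<noteq> 0} \<le> s}"

text \<open>Two-dimensional first-order Sigma-Delta quantization with scalar quantizer QA.
 sd_state QA X i j is the state u_{i,j}; sd_q the output q_{i,j}.\<close>
fun sd_state :: "(real \<Rightarrow> real) \<Rightarrow> (nat \<Rightarrow> nat \<Rightarrow> real) \<Rightarrow> nat \<Rightarrow> nat \<Rightarrow> real" where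
  "sd_state QA X 0 j = 0"
| "sd_state QA X (Suc i) 0 = 0"
| "sd_state QA X (Suc i) (Suc j) =
     (let v = sd_state QA X (Suc i) j + sd_state QA X i (Suc j) - sd_state QA X i j + X (Suc i) (Suc j)
      in v - QA v)"

definition sd_q :: "(real \<Rightarrow> real) \<Rightarrow> (nat \<Rightarrow> nat \<Rightarrow> real) \<Rightarrow> nat \<Rightarrow> nat \<Rightarrow> real" where
  "sd_q QA X i j = QA (sd_state QA X i (j - 1) + sd_state QA X (i - 1) j
                        - sd_state QA X (i - 1) (j - 1) + X i j)"

definition nearest_quantizer :: "real set \<Rightarrow> (real \<Rightarrow> real) \<Rightarrow> bool" where
  "nearest_quantizer A QA \<longleftrightarrow> (\<forall>z. QA z \<in> A \<and> (\<forall>a\<in>A. \<bar>z - QA z\<bar> \<le> \<bar>z - a\<bar>))"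

definition step_alphabet :: "real \<Rightarrow> real set \<Rightarrow> bool" where
  "step_alphabet \<delta> A \<longleftrightarrow> (\<exists>a0 (L::nat). A = (\<lambda>k. a0 + real k * \<delta>) ` {0..L})"

definition tv_obj :: "nat \<Rightarrow> (nat \<Rightarrow> nat \<Rightarrow> real) \<Rightarrow> real" where
  "tv_obj N Z = l1norm N (mmult N (mtr Dmat) Z) + l1norm N (mmult N Z Dmat)"

definition feasible :: "nat \<Rightarrow> real \<Rightarrow> (nat \<Rightarrow> nat \<Rightarrow> real) \<Rightarrow> (nat \<Rightarrow> nat \<Rightarrow> real) \<Rightarrow> bool" where
  "feasible N \<delta> q Z \<longleftrightarrow> maxnorm N (mmult N (mmult N Dinv (mdiff Z q)) (mtr Dinv)) \<le> \<delta> / 2"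

end

theory Submission
  imports Defs
begin

text \<open>Put W = Xh - X. The signal X is itself feasible, since X - q = D u D^T with
  |u| \<le> \<delta>/2; hence V = D^-1 W D^-T has entries of size at most \<delta> and W = D V D^T.
  Then ||W||_F^2 = <D^T W D, V> \<le> \<delta> ||D^T W D||_1 \<le> \<delta> (||D^T W||_1 + ||W D||_1),
  and the entries of D^T W and W D are at most 8\<delta>. Because Xh minimises the objective,
  the cone argument against a best s-term approximation bounds ||D^T W||_1 + ||W D||_1 by
  2\<sigma>_s(D^T X) + 2\<sigma>_s(X D) + 32\<delta>s. Only the bound on the state u enters: the
  alphabet, the quantiser and the range of X play no further role.\<close>

lemma mmult_assoc: "mmult N (mmult N A B) C = mmult N A (mmult N B C)"
proof (intro ext)
  fix i j
  have "(\<Sum>l=1..N. (\<Sum>k=1..N. A i k * B k l) * C l j)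
      = (\<Sum>l=1..N. \<Sum>k=1..N. A i k * (B k l * C l j))"
    by (simp add: sum_distrib_right mult.assoc)
  also have "\<dots> = (\<Sum>k=1..N. \<Sum>l=1..N. A i k * (B k l * C l j))"
    by (rule sum.swap)
  also have "\<dots> = (\<Sum>k=1..N. A i k * (\<Sum>l=1..N. B k l * C l j))"
    by (simp add: sum_distrib_left)
  finally show "mmult N (mmult N A B) C i j = mmult N A (mmult N B C) i j"
    by (simp add: mmult_def)
qed

lemma mmult_diff_right: "mmult N A (mdiff B C) = mdiff (mmult N A B) (mmult N A C)"
  by (auto simp: mmult_def mdiff_def right_diff_distrib sum_subtractf intro!: ext)

lemma mmult_diff_left: "mmult N (mdiff A B) C = mdiff (mmult N A C) (mmult N B C)"
  by (auto simp: mmult_def mdiff_def left_diff_distrib sum_subtractf intro!: ext)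

lemma mtr_mtr [simp]: "mtr (mtr A) = A"
  by (simp add: mtr_def)

lemma mtr_mmult: "mtr (mmult N A B) = mmult N (mtr B) (mtr A)"
  by (auto simp: mtr_def mmult_def mult.commute intro!: ext)

lemma mmult_cong_middle:
  assumes "\<And>i j. i \<in> {1..N} \<Longrightarrow> j \<in> {1..N} \<Longrightarrow> W i j = W' i j"
  shows "mmult N (mmult N A W) B = mmult N (mmult N A W') B"
  unfolding mmult_def using assms by (intro ext sum.cong refl arg_cong2[where f = "(*)"]) auto

lemma mmult_identity_left:
  assumes "\<And>k. k \<in> {1..N} \<Longrightarrow> M i k = (if i = k then 1 else 0)" and "i \<in> {1..N}"
  shows "mmult N M A i j = A i j"
proof -
  have "mmult N M A i j = (\<Sum>k=1..N. if i = k then A k j else 0)"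
    unfolding mmult_def using assms(1) by (intro sum.cong) auto
  with assms(2) show ?thesis by simp
qed

lemma mmult_identity_right:
  assumes "\<And>k. k \<in> {1..N} \<Longrightarrow> M k j = (if k = j then 1 else 0)" and "j \<in> {1..N}"
  shows "mmult N A M i j = A i j"
proof -
  have "mmult N A M i j = (\<Sum>k=1..N. if k = j then A i k else 0)"
    unfolding mmult_def using assms(1) by (intro sum.cong) auto
  with assms(2) show ?thesis by simp
qed

lemma mmult_Dmat_Dinv:
  assumes "i \<in> {1..N}" "j \<in> {1..N}"
  shows "mmult N Dmat Dinv i j = (if i = j then 1 else 0)"
proof -
  have "mmult N Dmat Dinv i j
      = (\<Sum>k=1..N. (if k = i then Dinv k j else 0) - (if k = i - 1 then Dinv k j else 0))"
    unfolding mmult_def using assms by (intro sum.cong) (auto simp: Dmat_def)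
  also have "\<dots> = Dinv i j - (\<Sum>k=1..N. if k = i - 1 then Dinv k j else 0)"
    using assms by (simp add: sum_subtractf)
  also have "\<dots> = (if i = j then 1 else 0)"
    using assms by (cases "i = 1") (auto simp: Dinv_def)
  finally show ?thesis .
qed

lemma mmult_Dinv_Dmat:
  assumes "i \<in> {1..N}" "j \<in> {1..N}"
  shows "mmult N Dinv Dmat i j = (if i = j then 1 else 0)"
proof -
  have "mmult N Dinv Dmat i j
      = (\<Sum>k=1..N. (if k = j then Dinv i k else 0) - (if k = Suc j then Dinv i k else 0))"
    unfolding mmult_def by (intro sum.cong) (auto simp: Dmat_def)
  also have "\<dots> = Dinv i j - (if Suc j \<le> N then Dinv i (Suc j) else 0)"
    using assms by (simp add: sum_subtractf)
  also have "\<dots> = (if i = j then 1 else 0)"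
    using assms by (auto simp: Dinv_def)
  finally show ?thesis .
qed

lemma mmult_sandwich_inverse:
  assumes inv: "\<And>i j. i \<in> {1..N} \<Longrightarrow> j \<in> {1..N} \<Longrightarrow> mmult N A B i j = (if i = j then 1 else 0)"
    and "i \<in> {1..N}" "j \<in> {1..N}"
  shows "mmult N (mmult N A (mmult N (mmult N B W) (mtr B))) (mtr A) i j = W i j"
proof -
  have "mmult N (mmult N A (mmult N (mmult N B W) (mtr B))) (mtr A) i j
      = mmult N (mmult N A B) (mmult N W (mtr (mmult N A B))) i j"
    by (simp add: mmult_assoc mtr_mmult)
  also have "\<dots> = mmult N W (mtr (mmult N A B)) i j"
    using inv assms(2) by (intro mmult_identity_left) auto
  also have "\<dots> = W i j"
    using inv assms(3) by (intro mmult_identity_right) (auto simp: mtr_def)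
  finally show ?thesis .
qed

lemma sum_abs_Dmat_row: "(\<Sum>k=1..N. \<bar>Dmat i k\<bar>) \<le> 2"
proof -
  have "(\<Sum>k=1..N. \<bar>Dmat i k\<bar>) \<le> (\<Sum>k=1..N. (if k = i then 1 else 0) + (if k = i - 1 then 1 else 0))"
    by (intro sum_mono) (auto simp: Dmat_def)
  also have "\<dots> \<le> 2"
    by (simp add: sum.distrib)
  finally show ?thesis .
qed

lemma sum_abs_Dmat_col: "(\<Sum>k=1..N. \<bar>Dmat k j\<bar>) \<le> 2"
proof -
  have "(\<Sum>k=1..N. \<bar>Dmat k j\<bar>) \<le> (\<Sum>k=1..N. (if k = j then 1 else 0) + (if k = Suc j then 1 else 0))"
    by (intro sum_mono) (auto simp: Dmat_def)
  also have "\<dots> \<le> 2"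
    by (simp add: sum.distrib)
  finally show ?thesis .
qed

lemma abs_mmult_le_row_sum:
  assumes "(\<Sum>k=1..N. \<bar>A i k\<bar>) \<le> a" "\<And>k. k \<in> {1..N} \<Longrightarrow> \<bar>B k j\<bar> \<le> b" "b \<ge> 0"
  shows "\<bar>mmult N A B i j\<bar> \<le> a * b"
proof -
  have "\<bar>mmult N A B i j\<bar> \<le> (\<Sum>k=1..N. \<bar>A i k\<bar> * \<bar>B k j\<bar>)"
    unfolding mmult_def by (rule order.trans[OF sum_abs]) (simp add: abs_mult)
  also have "\<dots> \<le> (\<Sum>k=1..N. \<bar>A i k\<bar> * b)"
    using assms(2) by (intro sum_mono mult_left_mono) auto
  also have "\<dots> = (\<Sum>k=1..N. \<bar>A i k\<bar>) * b"
    by (simp add: sum_distrib_right)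
  also have "\<dots> \<le> a * b"
    using assms(1,3) by (rule mult_right_mono)
  finally show ?thesis .
qed

lemma abs_mmult_le_col_sum:
  assumes "\<And>k. k \<in> {1..N} \<Longrightarrow> \<bar>A i k\<bar> \<le> a" "(\<Sum>k=1..N. \<bar>B k j\<bar>) \<le> b" "a \<ge> 0"
  shows "\<bar>mmult N A B i j\<bar> \<le> a * b"
proof -
  have "\<bar>mmult N A B i j\<bar> \<le> (\<Sum>k=1..N. \<bar>A i k\<bar> * \<bar>B k j\<bar>)"
    unfolding mmult_def by (rule order.trans[OF sum_abs]) (simp add: abs_mult)
  also have "\<dots> \<le> (\<Sum>k=1..N. a * \<bar>B k j\<bar>)"
    using assms(1) by (intro sum_mono mult_right_mono) auto
  also have "\<dots> = a * (\<Sum>k=1..N. \<bar>B k j\<bar>)"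
    by (simp add: sum_distrib_left)
  also have "\<dots> \<le> a * b"
    using assms(2,3) by (rule mult_left_mono)
  finally show ?thesis .
qed

lemma abs_mmult_Dmat_le:
  assumes "\<And>i j. i \<in> {1..N} \<Longrightarrow> j \<in> {1..N} \<Longrightarrow> \<bar>M i j\<bar> \<le> c" "c \<ge> 0"
    and "i \<in> {1..N}" "j \<in> {1..N}"
  shows "\<bar>mmult N Dmat M i j\<bar> \<le> 2 * c"
    and "\<bar>mmult N (mtr Dmat) M i j\<bar> \<le> 2 * c"
    and "\<bar>mmult N M Dmat i j\<bar> \<le> 2 * c"
    and "\<bar>mmult N M (mtr Dmat) i j\<bar> \<le> 2 * c"
proof -
  have row: "\<And>k. k \<in> {1..N} \<Longrightarrow> \<bar>M k j\<bar> \<le> c"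
    and col: "\<And>k. k \<in> {1..N} \<Longrightarrow> \<bar>M i k\<bar> \<le> c"
    using assms by auto
  show "\<bar>mmult N Dmat M i j\<bar> \<le> 2 * c"
    using sum_abs_Dmat_row row assms(2) by (rule abs_mmult_le_row_sum[where A = Dmat and B = M])
  show "\<bar>mmult N (mtr Dmat) M i j\<bar> \<le> 2 * c"
    using sum_abs_Dmat_col row assms(2) unfolding mtr_def
    by (rule abs_mmult_le_row_sum[where A = "\<lambda>i k. Dmat k i"])
  have "\<bar>mmult N M Dmat i j\<bar> \<le> c * 2"
    using col sum_abs_Dmat_col assms(2) by (rule abs_mmult_le_col_sum[where A = M and B = Dmat])
  then show "\<bar>mmult N M Dmat i j\<bar> \<le> 2 * c"
    by linarith
  have "\<bar>mmult N M (mtr Dmat) i j\<bar> \<le> c * 2"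
    using col sum_abs_Dmat_row assms(2) unfolding mtr_def
    by (rule abs_mmult_le_col_sum[where B = "\<lambda>k j. Dmat j k"])
  then show "\<bar>mmult N M (mtr Dmat) i j\<bar> \<le> 2 * c"
    by linarith
qed

definition frob_inner :: "nat \<Rightarrow> (nat \<Rightarrow> nat \<Rightarrow> real) \<Rightarrow> (nat \<Rightarrow> nat \<Rightarrow> real) \<Rightarrow> real" where
  "frob_inner N A B = (\<Sum>i=1..N. \<Sum>j=1..N. A i j * B i j)"

lemma frob_inner_mmult_right: "frob_inner N P (mmult N B C) = frob_inner N (mmult N P (mtr C)) B"
proof -
  have "frob_inner N P (mmult N B C) = (\<Sum>i=1..N. \<Sum>j=1..N. \<Sum>k=1..N. P i j * B i k * C k j)"
    by (simp add: frob_inner_def mmult_def sum_distrib_left mult.assoc)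
  also have "\<dots> = (\<Sum>i=1..N. \<Sum>k=1..N. \<Sum>j=1..N. P i j * B i k * C k j)"
    by (intro sum.cong refl sum.swap)
  also have "\<dots> = (\<Sum>i=1..N. \<Sum>k=1..N. (\<Sum>j=1..N. P i j * C k j) * B i k)"
    by (intro sum.cong refl) (simp add: sum_distrib_left sum_distrib_right mult_ac)
  also have "\<dots> = frob_inner N (mmult N P (mtr C)) B"
    by (simp add: frob_inner_def mmult_def mtr_def)
  finally show ?thesis .
qed

lemma frob_inner_mmult_left: "frob_inner N W (mmult N A B) = frob_inner N (mmult N (mtr A) W) B"
proof -
  have "frob_inner N W (mmult N A B) = (\<Sum>i=1..N. \<Sum>j=1..N. \<Sum>k=1..N. W i j * A i k * B k j)"
    by (simp add: frob_inner_def mmult_def sum_distrib_left mult.assoc)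
  also have "\<dots> = (\<Sum>i=1..N. \<Sum>k=1..N. \<Sum>j=1..N. W i j * A i k * B k j)"
    by (intro sum.cong refl sum.swap)
  also have "\<dots> = (\<Sum>k=1..N. \<Sum>j=1..N. \<Sum>i=1..N. W i j * A i k * B k j)"
    by (subst sum.swap) (intro sum.cong refl sum.swap)
  also have "\<dots> = (\<Sum>k=1..N. \<Sum>j=1..N. (\<Sum>i=1..N. A i k * W i j) * B k j)"
    by (intro sum.cong refl) (simp add: sum_distrib_left sum_distrib_right mult_ac)
  also have "\<dots> = frob_inner N (mmult N (mtr A) W) B"
    by (simp add: frob_inner_def mmult_def mtr_def)
  finally show ?thesis .
qed

lemma frob_inner_le_l1norm:
  assumes "\<And>i j. i \<in> {1..N} \<Longrightarrow> j \<in> {1..N} \<Longrightarrow> \<bar>V i j\<bar> \<le> d"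
  shows "frob_inner N M V \<le> d * l1norm N M"
proof -
  have "frob_inner N M V \<le> (\<Sum>i=1..N. \<Sum>j=1..N. \<bar>M i j\<bar> * d)"
    unfolding frob_inner_def
  proof (intro sum_mono)
    fix i j assume "i \<in> {1..N}" "j \<in> {1..N}"
    have "M i j * V i j \<le> \<bar>M i j\<bar> * \<bar>V i j\<bar>"
      by (metis abs_ge_self abs_mult)
    also have "\<dots> \<le> \<bar>M i j\<bar> * d"
      using assms \<open>i \<in> {1..N}\<close> \<open>j \<in> {1..N}\<close> by (intro mult_left_mono) auto
    finally show "M i j * V i j \<le> \<bar>M i j\<bar> * d" .
  qed
  also have "\<dots> = d * l1norm N M"
    by (simp add: l1norm_def sum_distrib_left mult.commute)
  finally show ?thesis .
qed

lemma l1norm_nonneg: "l1norm N Z \<ge> 0"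
  unfolding l1norm_def by (intro sum_nonneg) auto

lemma l1norm_mtr: "l1norm N (mtr A) = l1norm N A"
  unfolding l1norm_def mtr_def by (rule sum.swap)

lemma l1norm_mmult_le_right:
  assumes "\<And>k. k \<in> {1..N} \<Longrightarrow> (\<Sum>j=1..N. \<bar>M k j\<bar>) \<le> b"
  shows "l1norm N (mmult N P M) \<le> b * l1norm N P"
proof -
  have "l1norm N (mmult N P M) \<le> (\<Sum>i=1..N. \<Sum>j=1..N. \<Sum>k=1..N. \<bar>P i k\<bar> * \<bar>M k j\<bar>)"
    unfolding l1norm_def mmult_def
    by (intro sum_mono order.trans[OF sum_abs]) (simp add: abs_mult)
  also have "\<dots> = (\<Sum>i=1..N. \<Sum>k=1..N. \<bar>P i k\<bar> * (\<Sum>j=1..N. \<bar>M k j\<bar>))"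
    by (subst sum_distrib_left) (intro sum.cong refl sum.swap)
  also have "\<dots> \<le> (\<Sum>i=1..N. \<Sum>k=1..N. \<bar>P i k\<bar> * b)"
    using assms by (intro sum_mono mult_left_mono) auto
  also have "\<dots> = b * l1norm N P"
    by (simp add: l1norm_def sum_distrib_left sum_distrib_right mult_ac)
  finally show ?thesis .
qed

lemma l1norm_mmult_le_left:
  assumes "\<And>k. k \<in> {1..N} \<Longrightarrow> (\<Sum>i=1..N. \<bar>M i k\<bar>) \<le> b"
  shows "l1norm N (mmult N M Q) \<le> b * l1norm N Q"
proof -
  have "l1norm N (mmult N M Q) = l1norm N (mmult N (mtr Q) (mtr M))"
    by (metis l1norm_mtr mtr_mmult)
  also have "\<dots> \<le> b * l1norm N (mtr Q)"
    using assms by (intro l1norm_mmult_le_right) (simp add: mtr_def)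
  finally show ?thesis
    by (simp add: l1norm_mtr)
qed

lemma frob_sq_le_tv_obj:
  assumes W: "\<And>i j. i \<in> {1..N} \<Longrightarrow> j \<in> {1..N} \<Longrightarrow> W i j = mmult N (mmult N Dmat V) (mtr Dmat) i j"
    and V: "\<And>i j. i \<in> {1..N} \<Longrightarrow> j \<in> {1..N} \<Longrightarrow> \<bar>V i j\<bar> \<le> d" and "d \<ge> 0"
  shows "(\<Sum>i=1..N. \<Sum>j=1..N. (W i j)\<^sup>2) \<le> d * tv_obj N W"
proof -
  define M where "M = mmult N (mmult N (mtr Dmat) W) Dmat"
  have "(\<Sum>i=1..N. \<Sum>j=1..N. (W i j)\<^sup>2) = frob_inner N W (mmult N (mmult N Dmat V) (mtr Dmat))"
    unfolding frob_inner_def by (intro sum.cong refl) (simp add: W power2_eq_square)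
  also have "\<dots> = frob_inner N W (mmult N Dmat (mmult N V (mtr Dmat)))"
    by (simp add: mmult_assoc)
  also have "\<dots> = frob_inner N M V"
    unfolding M_def by (subst frob_inner_mmult_left, subst frob_inner_mmult_right) simp
  also have "\<dots> \<le> d * l1norm N M"
    using V by (rule frob_inner_le_l1norm)
  also have "\<dots> \<le> d * tv_obj N W"
  proof -
    have "l1norm N M \<le> 2 * l1norm N (mmult N (mtr Dmat) W)"
      unfolding M_def using sum_abs_Dmat_row by (rule l1norm_mmult_le_right)
    moreover have "l1norm N M \<le> 2 * l1norm N (mmult N W Dmat)"
      unfolding M_def mmult_assoc using sum_abs_Dmat_row
      by (intro l1norm_mmult_le_left) (simp add: mtr_def)
    ultimately have "l1norm N M \<le> tv_obj N W"
      unfolding tv_obj_def by linarith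
    with \<open>d \<ge> 0\<close> show ?thesis
      by (rule mult_left_mono[rotated])
  qed
  finally show ?thesis .
qed

lemma card_support_eq_sum:
  fixes N :: nat and Y :: "nat \<Rightarrow> nat \<Rightarrow> real"
  shows "real (card {(i,j) \<in> {1..N} \<times> {1..N}. Y i j \<noteq> 0})
      = (\<Sum>i=1..N. \<Sum>j=1..N. if Y i j \<noteq> 0 then 1 else 0)"
proof -
  have "(\<Sum>i=1..N. \<Sum>j=1..N. if Y i j \<noteq> 0 then 1 else 0)
      = (\<Sum>p\<in>{1..N} \<times> {1..N}. if Y (fst p) (snd p) \<noteq> 0 then 1 else (0::real))"
    by (simp add: sum.cartesian_product split_def)
  also have "\<dots> = (\<Sum>p\<in>{p \<in> {1..N} \<times> {1..N}. Y (fst p) (snd p) \<noteq> 0}. 1)"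
    by (rule sum.inter_filter[symmetric]) simp
  also have "{p \<in> {1..N} \<times> {1..N}. Y (fst p) (snd p) \<noteq> 0} = {(i,j) \<in> {1..N} \<times> {1..N}. Y i j \<noteq> 0}"
    by auto
  finally show ?thesis by simp
qed

text \<open>The cone inequality: off the support of Y the l1 mass of y - x is paid for by
  |y| - |x| + 2|x - Y|, on the support by the entrywise bound c.\<close>
lemma l1norm_diff_le_sparse:
  assumes c: "\<And>i j. i \<in> {1..N} \<Longrightarrow> j \<in> {1..N} \<Longrightarrow> \<bar>y i j - x i j\<bar> \<le> c" "c \<ge> 0"
    and Y: "card {(i,j) \<in> {1..N} \<times> {1..N}. Y i j \<noteq> 0} \<le> s"
  shows "l1norm N (mdiff y x) \<le> l1norm N y - l1norm N x + 2 * l1norm N (mdiff x Y) + 2 * c * real s"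
proof -
  have entry: "\<bar>y i j - x i j\<bar>
      \<le> \<bar>y i j\<bar> - \<bar>x i j\<bar> + 2 * \<bar>x i j - Y i j\<bar> + 2 * c * (if Y i j \<noteq> 0 then 1 else 0)"
    if "i \<in> {1..N}" "j \<in> {1..N}" for i j
  proof (cases "Y i j = 0")
    case True
    then show ?thesis
      using abs_triangle_ineq4[of "y i j" "x i j"] by simp
  next
    case False
    show ?thesis
      using c(1)[OF that] abs_triangle_ineq2_sym[of "x i j" "y i j"] abs_ge_zero[of "x i j - Y i j"]
      by (simp only: False not_False_eq_True if_True mult_1_right) argo
  qed
  have "l1norm N (mdiff y x) \<le> (\<Sum>i=1..N. \<Sum>j=1..N. \<bar>y i j\<bar> - \<bar>x i j\<bar> + 2 * \<bar>x i j - Y i j\<bar>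
      + 2 * c * (if Y i j \<noteq> 0 then 1 else 0))"
    unfolding l1norm_def mdiff_def by (intro sum_mono entry) auto
  also have "\<dots> = l1norm N y - l1norm N x + 2 * l1norm N (mdiff x Y)
      + 2 * c * (\<Sum>i=1..N. \<Sum>j=1..N. if Y i j \<noteq> 0 then 1 else 0)"
    by (simp add: l1norm_def mdiff_def sum.distrib sum_subtractf sum_distrib_left)
  also have "\<dots> \<le> l1norm N y - l1norm N x + 2 * l1norm N (mdiff x Y) + 2 * c * real s"
    using Y c(2) unfolding card_support_eq_sum[symmetric] by (intro add_left_mono mult_left_mono) auto
  finally show ?thesis .
qed

lemma sparse_approx_errors_nonempty:
  "{l1norm N (mdiff Z Y) | Y. card {(i,j) \<in> {1..N} \<times> {1..N}. Y i j \<noteq> 0} \<le> s} \<noteq> {}"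
proof -
  have "l1norm N (mdiff Z (\<lambda>i j. 0))
      \<in> {l1norm N (mdiff Z Y) | Y. card {(i,j) \<in> {1..N} \<times> {1..N}. Y i j \<noteq> 0} \<le> s}"
    by auto
  then show ?thesis by blast
qed

lemma sigma_s_nonneg: "sigma_s N s Z \<ge> 0"
  unfolding sigma_s_def using sparse_approx_errors_nonempty
  by (intro cInf_greatest) (auto simp: l1norm_nonneg)

lemma l1norm_diff_le_sigma_s:
  assumes "\<And>i j. i \<in> {1..N} \<Longrightarrow> j \<in> {1..N} \<Longrightarrow> \<bar>y i j - x i j\<bar> \<le> c" "c \<ge> 0"
  shows "l1norm N (mdiff y x) \<le> l1norm N y - l1norm N x + 2 * sigma_s N s x + 2 * c * real s"
proof -
  have "(l1norm N (mdiff y x) - l1norm N y + l1norm N x - 2 * c * real s) / 2 \<le> sigma_s N s x"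
    unfolding sigma_s_def
  proof (rule cInf_greatest[OF sparse_approx_errors_nonempty])
    fix e assume "e \<in> {l1norm N (mdiff x Y) | Y. card {(i,j) \<in> {1..N} \<times> {1..N}. Y i j \<noteq> 0} \<le> s}"
    then obtain Y where "card {(i,j) \<in> {1..N} \<times> {1..N}. Y i j \<noteq> 0} \<le> s" "e = l1norm N (mdiff x Y)"
      by blast
    with l1norm_diff_le_sparse[OF assms] show
      "(l1norm N (mdiff y x) - l1norm N y + l1norm N x - 2 * c * real s) / 2 \<le> e"
      by force
  qed
  then show ?thesis by simp
qed

lemma maxnorm_eq_Max_image:
  "maxnorm N Z = Max (insert 0 ((\<lambda>(i,j). \<bar>Z i j\<bar>) ` ({1..N} \<times> {1..N})))"
proof -
  have "{\<bar>Z i j\<bar> | i j. i \<in> {1..N} \<and> j \<in> {1..N}} = (\<lambda>(i,j). \<bar>Z i j\<bar>) ` ({1..N} \<times> {1..N})"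
    by force
  then show ?thesis
    unfolding maxnorm_def by simp
qed

lemma maxnorm_ge: "i \<in> {1..N} \<Longrightarrow> j \<in> {1..N} \<Longrightarrow> \<bar>Z i j\<bar> \<le> maxnorm N Z"
  unfolding maxnorm_eq_Max_image by (rule Max_ge) (auto intro!: imageI)

lemma maxnorm_cong:
  "(\<And>i j. i \<in> {1..N} \<Longrightarrow> j \<in> {1..N} \<Longrightarrow> Z i j = Z' i j) \<Longrightarrow> maxnorm N Z = maxnorm N Z'"
  unfolding maxnorm_eq_Max_image by (intro arg_cong[where f = "\<lambda>S. Max (insert 0 S)"] image_cong) auto

lemma feasible_of_state:
  assumes "\<And>i j. i \<in> {1..N} \<Longrightarrow> j \<in> {1..N} \<Longrightarrow> mdiff X q i j = mmult N (mmult N Dmat u) (mtr Dmat) i j"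
    and "maxnorm N u \<le> \<delta> / 2"
  shows "feasible N \<delta> q X"
proof -
  have "mmult N (mmult N Dinv (mdiff X q)) (mtr Dinv)
      = mmult N (mmult N Dinv (mmult N (mmult N Dmat u) (mtr Dmat))) (mtr Dinv)"
    using assms(1) by (rule mmult_cong_middle)
  then have "maxnorm N (mmult N (mmult N Dinv (mdiff X q)) (mtr Dinv)) = maxnorm N u"
    using mmult_sandwich_inverse[OF mmult_Dinv_Dmat] by (intro maxnorm_cong) simp
  with assms(2) show ?thesis
    unfolding feasible_def by simp
qed

lemma feasible_diff_bounded:
  assumes "feasible N \<delta> q Z1" "feasible N \<delta> q Z2" "i \<in> {1..N}" "j \<in> {1..N}"
  shows "\<bar>mmult N (mmult N Dinv (mdiff Z1 Z2)) (mtr Dinv) i j\<bar> \<le> \<delta>"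
proof -
  have half: "\<bar>mmult N (mmult N Dinv (mdiff Z q)) (mtr Dinv) i j\<bar> \<le> \<delta> / 2"
    if "feasible N \<delta> q Z" for Z
    using that unfolding feasible_def by (rule order_trans[OF maxnorm_ge[OF assms(3,4)]])
  have "mdiff Z1 Z2 = mdiff (mdiff Z1 q) (mdiff Z2 q)"
    by (auto simp: mdiff_def intro!: ext)
  then have "mmult N (mmult N Dinv (mdiff Z1 Z2)) (mtr Dinv) i j
      = mmult N (mmult N Dinv (mdiff Z1 q)) (mtr Dinv) i j
        - mmult N (mmult N Dinv (mdiff Z2 q)) (mtr Dinv) i j"
    by (simp only: mmult_diff_right mmult_diff_left) (simp add: mdiff_def)
  with half[OF assms(1)] half[OF assms(2)] show ?thesis
    unfolding abs_le_iff by linarith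
qed

lemma frob_sq_error_le:
  assumes "\<delta> > 0" "feasible N \<delta> q Xh" "feasible N \<delta> q X" "tv_obj N Xh \<le> tv_obj N X"
  shows "(\<Sum>i=1..N. \<Sum>j=1..N. (mdiff Xh X i j)\<^sup>2)
      \<le> \<delta> * (32 * \<delta> * real s + 2 * sigma_s N s (mmult N (mtr Dmat) X)
                + 2 * sigma_s N s (mmult N X Dmat))"
proof -
  define W where "W = mdiff Xh X"
  define V where "V = mmult N (mmult N Dinv W) (mtr Dinv)"
  have V_le: "\<bar>V i j\<bar> \<le> \<delta>" if "i \<in> {1..N}" "j \<in> {1..N}" for i j
    unfolding V_def W_def using assms(2,3) that by (rule feasible_diff_bounded)
  have W_eq: "W i j = mmult N (mmult N Dmat V) (mtr Dmat) i j"
    if "i \<in> {1..N}" "j \<in> {1..N}" for i j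
    unfolding V_def using mmult_sandwich_inverse[OF mmult_Dmat_Dinv that] by (simp add: mmult_assoc)
  have "\<bar>mmult N Dmat V i j\<bar> \<le> 2 * \<delta>" if "i \<in> {1..N}" "j \<in> {1..N}" for i j
    using V_le assms(1) that by (intro abs_mmult_Dmat_le(1)) auto
  then have "\<bar>W i j\<bar> \<le> 2 * (2 * \<delta>)" if "i \<in> {1..N}" "j \<in> {1..N}" for i j
    using assms(1) that unfolding W_eq[OF that] by (intro abs_mmult_Dmat_le(4)) auto
  then have DW_le: "\<bar>mmult N (mtr Dmat) W i j\<bar> \<le> 8 * \<delta>" "\<bar>mmult N W Dmat i j\<bar> \<le> 8 * \<delta>"
    if "i \<in> {1..N}" "j \<in> {1..N}" for i j
    using abs_mmult_Dmat_le(2,3)[of N W "4 * \<delta>"] assms(1) that by auto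
  have DtW: "mmult N (mtr Dmat) W = mdiff (mmult N (mtr Dmat) Xh) (mmult N (mtr Dmat) X)"
    unfolding W_def by (rule mmult_diff_right)
  have WD: "mmult N W Dmat = mdiff (mmult N Xh Dmat) (mmult N X Dmat)"
    unfolding W_def by (rule mmult_diff_left)
  have cone_DtW: "l1norm N (mmult N (mtr Dmat) W) \<le> l1norm N (mmult N (mtr Dmat) Xh)
      - l1norm N (mmult N (mtr Dmat) X) + 2 * sigma_s N s (mmult N (mtr Dmat) X) + 2 * (8 * \<delta>) * real s"
    unfolding DtW
    by (rule l1norm_diff_le_sigma_s) (use DW_le(1) assms(1) in \<open>auto simp: DtW mdiff_def\<close>)
  have cone_WD: "l1norm N (mmult N W Dmat) \<le> l1norm N (mmult N Xh Dmat)
      - l1norm N (mmult N X Dmat) + 2 * sigma_s N s (mmult N X Dmat) + 2 * (8 * \<delta>) * real s"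
    unfolding WD
    by (rule l1norm_diff_le_sigma_s) (use DW_le(2) assms(1) in \<open>auto simp: WD mdiff_def\<close>)
  have "(\<Sum>i=1..N. \<Sum>j=1..N. (W i j)\<^sup>2) \<le> \<delta> * tv_obj N W"
    using W_eq V_le assms(1) by (intro frob_sq_le_tv_obj) auto
  also have "\<dots> \<le> \<delta> * (32 * \<delta> * real s + 2 * sigma_s N s (mmult N (mtr Dmat) X)
                      + 2 * sigma_s N s (mmult N X Dmat))"
    using cone_DtW cone_WD assms(1,4) unfolding tv_obj_def by (intro mult_left_mono) auto
  finally show ?thesis
    unfolding W_def .
qed

lemma sqrt_error_bound:
  fixes F d a b :: real and s :: nat
  assumes "d > 0" "a \<ge> 0" "b \<ge> 0" "F \<le> d * (32 * d * real s + 2 * a + 2 * b)"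
  shows "sqrt F \<le> 6 * (sqrt (real s) * sqrt d + sqrt a + sqrt b) * sqrt d"
proof -
  define e where "e = 32 * (real s * d)"
  have "e \<ge> 0"
    using assms(1) by (simp add: e_def)
  have "sqrt (e + 2 * a + 2 * b) \<le> sqrt (e + 2 * a) + sqrt (2 * b)"
    using \<open>e \<ge> 0\<close> assms(2,3) by (intro sqrt_add_le_add_sqrt) auto
  also have "\<dots> \<le> sqrt e + sqrt (2 * a) + sqrt (2 * b)"
    using \<open>e \<ge> 0\<close> assms(2) sqrt_add_le_add_sqrt[of e "2 * a"] by simp
  also have "\<dots> = sqrt 32 * (sqrt (real s) * sqrt d) + sqrt 2 * sqrt a + sqrt 2 * sqrt b"
    by (simp add: e_def real_sqrt_mult)
  also have "\<dots> \<le> 6 * (sqrt (real s) * sqrt d + sqrt a + sqrt b)"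
  proof -
    have "sqrt 32 \<le> 6" "sqrt 2 \<le> (6::real)"
      by (simp_all add: real_sqrt_le_iff[of _ 36, simplified])
    then have "sqrt 32 * (sqrt (real s) * sqrt d) \<le> 6 * (sqrt (real s) * sqrt d)"
      "sqrt 2 * sqrt a \<le> 6 * sqrt a" "sqrt 2 * sqrt b \<le> 6 * sqrt b"
      using assms(1-3) by (auto intro!: mult_right_mono)
    then show ?thesis
      by (simp add: distrib_left)
  qed
  finally have root: "sqrt (e + 2 * a + 2 * b) \<le> 6 * (sqrt (real s) * sqrt d + sqrt a + sqrt b)" .
  have "sqrt F \<le> sqrt d * sqrt (e + 2 * a + 2 * b)"
    using assms(4) unfolding e_def by (metis real_sqrt_le_mono real_sqrt_mult mult.commute mult.assoc)
  also have "\<dots> \<le> sqrt d * (6 * (sqrt (real s) * sqrt d + sqrt a + sqrt b))"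
    using root assms(1) by (intro mult_left_mono) simp_all
  finally show ?thesis
    by (simp add: mult_ac)
qed

theorem theorem4:
  shows "\<exists>C::real. \<forall>(N::nat) (\<delta>::real) (A::real set) (QA::real \<Rightarrow> real)
            (X::nat \<Rightarrow> nat \<Rightarrow> real) (Xh::nat \<Rightarrow> nat \<Rightarrow> real) (s::nat).
      \<delta> > 0 \<longrightarrow> step_alphabet \<delta> A \<longrightarrow> nearest_quantizer A QA \<longrightarrow>
      (\<forall>i\<in>{1..N}. \<forall>j\<in>{1..N}. 0 \<le> X i j \<and> X i j \<le> 1) \<longrightarrow>
      (\<forall>i\<in>{1..N}. \<forall>j\<in>{1..N}. mdiff X (sd_q QA X) i j
          = mmult N (mmult N Dmat (sd_state QA X)) (mtr Dmat) i j) \<longrightarrow>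
      maxnorm N (sd_state QA X) \<le> \<delta> / 2 \<longrightarrow>
      feasible N \<delta> (sd_q QA X) Xh \<longrightarrow>
      (\<forall>Z. feasible N \<delta> (sd_q QA X) Z \<longrightarrow> tv_obj N Xh \<le> tv_obj N Z) \<longrightarrow>
      1 \<le> s \<longrightarrow> s \<le> N\<^sup>2 \<longrightarrow>
      frob N (mdiff Xh X)
        \<le> C * (sqrt (real s) * sqrt \<delta> + sqrt (sigma_s N s (mmult N (mtr Dmat) X))
                + sqrt (sigma_s N s (mmult N X Dmat))) * sqrt \<delta>"
proof (rule exI[of _ 6], intro allI impI)
  fix N :: nat and \<delta> :: real and A :: "real set" and QA :: "real \<Rightarrow> real"
    and X Xh :: "nat \<Rightarrow> nat \<Rightarrow> real" and s :: nat
  assume "\<delta> > 0"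
    and state: "\<forall>i\<in>{1..N}. \<forall>j\<in>{1..N}. mdiff X (sd_q QA X) i j
          = mmult N (mmult N Dmat (sd_state QA X)) (mtr Dmat) i j"
    and "maxnorm N (sd_state QA X) \<le> \<delta> / 2"
    and "feasible N \<delta> (sd_q QA X) Xh"
    and optimal: "\<forall>Z. feasible N \<delta> (sd_q QA X) Z \<longrightarrow> tv_obj N Xh \<le> tv_obj N Z"
  have "feasible N \<delta> (sd_q QA X) X"
    using state \<open>maxnorm N (sd_state QA X) \<le> \<delta> / 2\<close> by (intro feasible_of_state) auto
  with optimal have "tv_obj N Xh \<le> tv_obj N X"
    by blast
  with \<open>\<delta> > 0\<close> \<open>feasible N \<delta> (sd_q QA X) Xh\<close> \<open>feasible N \<delta> (sd_q QA X) X\<close>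
  have "(\<Sum>i=1..N. \<Sum>j=1..N. (mdiff Xh X i j)\<^sup>2)
      \<le> \<delta> * (32 * \<delta> * real s + 2 * sigma_s N s (mmult N (mtr Dmat) X)
                + 2 * sigma_s N s (mmult N X Dmat))"
    by (rule frob_sq_error_le)
  then show "frob N (mdiff Xh X)
      \<le> 6 * (sqrt (real s) * sqrt \<delta> + sqrt (sigma_s N s (mmult N (mtr Dmat) X))
              + sqrt (sigma_s N s (mmult N X Dmat))) * sqrt \<delta>"
    unfolding frob_def using \<open>\<delta> > 0\<close> by (intro sqrt_error_bound) (auto simp: sigma_s_nonneg)
qed

end
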